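(* Let $M\ge1$, let $\zeta_M$ be a primitive $M$-th root of unity, and let $f(x)\in\mathbb C[x]$ be monic with $f(0)\neq0$. Then $f(x)$ divides $f(x^k)$ in $\mathbb C[x]$ for all integers $k\ge1$ with $k\equiv1\pmod M$ if and only if $f(x)$ equals, up to a nonzero constant factor, $\operatorname{lcm}_{m\ge1,\,0\le j\le M-1}(\zeta_M^jx^m-1)^{h_{m,j}}$ for some integers $h_{m,j}\ge0$, only finitely many of which are nonzero. *)

theory Defs
  imports Complex_Main "HOL-Computational_Algebra.Polynomial_Factorial" "HOL-Computational_Algebra.Field_as_Ring"
begin

definition primitive_root_unity :: "nat \<Rightarrow> complex \<Rightarrow> bool" where
  "primitive_root_unity M z \<longleftrightarrow> 0 < M \<and> z ^ M = 1 \<and> (\<forall>d. 0 < d \<and> d < M \<longrightarrow> z ^ d \<noteq> 1)"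

end

theory Submission
  imports Defs "HOL-Computational_Algebra.Fundamental_Theorem_Algebra"
begin

text \<open>If \<open>f\<close> divides \<open>f(x^k)\<close> for every \<open>k \<equiv> 1 (mod M)\<close>, then, since \<open>x^k - a^k\<close> has a simple
  root at \<open>a \<noteq> 0\<close>, the multiplicity of \<open>f\<close> at a root \<open>a\<close> is at most its multiplicity at \<open>a^k\<close>.
  Hence all \<open>a^(1+Mt)\<close> are roots of \<open>f\<close>, so \<open>a^M\<close> is a root of unity, of order \<open>m\<close> say. As
  \<open>(a^m)^M = 1\<close>, some \<open>j < M\<close> has \<open>\<zeta>^j a^m = 1\<close>, and the roots of \<open>\<zeta>^j x^m - 1\<close> are exactly the
  \<open>a^(1+Mi)\<close>, all at least as multiple in \<open>f\<close> as \<open>a\<close>. Taking for \<open>h(m,j)\<close> the largest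
  multiplicity of a root attached to \<open>(m,j)\<close> in this way, \<open>f\<close> and the lcm have the same
  multiplicity everywhere. Conversely \<open>\<zeta>^j x^m - 1\<close> divides its substitution \<open>x \<mapsto> x^k\<close> because
  \<open>(\<zeta>^j)^k = \<zeta>^j\<close>, and this passes to powers and lcms.\<close>

lemma power_mod_eq:
  fixes x :: "'a::monoid_mult"
  assumes "x ^ M = 1"
  shows "x ^ (n mod M) = x ^ n"
proof -
  have "x ^ n = x ^ (n mod M) * (x ^ M) ^ (n div M)"
    by (metis mod_div_mult_eq power_add power_mult mult.commute)
  then show ?thesis using assms by simp
qed

lemma primitive_root_unity_powers:
  assumes w: "primitive_root_unity n w" and u: "u ^ n = 1"
  shows "\<exists>i<n. u = w ^ i"
proof -
  have n: "0 < n" and wn: "w ^ n = 1" and minimal: "\<And>d. 0 < d \<Longrightarrow> d < n \<Longrightarrow> w ^ d \<noteq> 1"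
    using w unfolding primitive_root_unity_def by auto
  have w0: "w \<noteq> 0" using wn n by (auto simp: power_0_left)
  have distinct: "w ^ i \<noteq> w ^ k" if "i < k" "k < n" for i k
  proof
    assume "w ^ i = w ^ k"
    also have "w ^ k = w ^ i * w ^ (k - i)" using \<open>i < k\<close> by (simp flip: power_add)
    finally have "w ^ (k - i) = 1" using w0 by simp
    with minimal[of "k - i"] that show False by linarith
  qed
  have "inj_on (\<lambda>i. w ^ i) {..<n}"
    by (rule inj_onI) (metis distinct lessThan_iff linorder_neqE_nat)
  then have "card ((\<lambda>i. w ^ i) ` {..<n}) = card {u :: complex. u ^ n = 1}"
    by (simp add: card_image card_roots_unity_eq[OF n])
  moreover have "(\<lambda>i. w ^ i) ` {..<n} \<subseteq> {u. u ^ n = 1}"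
    using wn by (auto simp flip: power_mult simp: mult.commute[of _ n] power_mult)
  ultimately have "(\<lambda>i. w ^ i) ` {..<n} = {u. u ^ n = 1}"
    using finite_roots_unity[of n] n by (intro card_subset_eq) auto
  then show ?thesis using u by auto
qed

lemma primitive_root_unity_Least:
  assumes "0 < t" "b ^ t = 1"
  shows "primitive_root_unity (LEAST d. 0 < d \<and> b ^ d = 1) b"
  using LeastI[of "\<lambda>d. 0 < d \<and> b ^ d = 1" t] not_less_Least[of _ "\<lambda>d. 0 < d \<and> b ^ d = 1"] assms
  unfolding primitive_root_unity_def by auto

lemma power_eq_power_imp_eq_mult_root:
  assumes "primitive_root_unity m b" "a \<noteq> 0" "x ^ m = a ^ m"
  shows "\<exists>i. x = a * b ^ i"
proof -
  have "(x / a) ^ m = 1" using assms(2,3) by (simp add: power_divide)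
  then obtain i where "x / a = b ^ i" using primitive_root_unity_powers[OF assms(1)] by blast
  then show ?thesis using assms(2) by (auto simp: field_simps)
qed

lemma root_of_unity_if_finite_orbit:
  fixes a b :: "'a::field"
  assumes "a \<noteq> 0" "b \<noteq> 0" "finite (range (\<lambda>t::nat. a * b ^ t))"
  shows "\<exists>t>0. b ^ t = 1"
proof -
  have "\<not> inj (\<lambda>t::nat. a * b ^ t)"
    using assms(3) finite_imageD infinite_UNIV_nat by blast
  then obtain s t where "s < t" "a * b ^ s = a * b ^ t"
    unfolding inj_def by (metis linorder_neqE_nat)
  moreover have "b ^ t = b ^ s * b ^ (t - s)" using \<open>s < t\<close> by (simp flip: power_add)
  ultimately show ?thesis using assms(1,2) by (intro exI[of _ "t - s"]) auto
qed

lemma order_power: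
  fixes p :: "'a::idom poly"
  assumes "p \<noteq> 0"
  shows "order a (p ^ n) = n * order a p"
  using assms by (induction n) (auto simp: order_mult)

lemma order_le_imp_dvd:
  fixes p q :: "'a::alg_closed_field poly"
  assumes "p \<noteq> 0" "q \<noteq> 0" "\<And>a. order a p \<le> order a q"
  shows "p dvd q"
  using assms
proof (induction "degree p" arbitrary: p q)
  case 0
  then show ?case by (metis degree_eq_zeroE const_poly_dvd_iff dvd_field_iff pCons_eq_0_iff)
next
  case (Suc n)
  obtain a where "poly p a = 0"
    using alg_closed_imp_poly_has_root[of p] Suc.hyps(2) by auto
  then have "order a p > 0" using Suc.prems(1) by (simp add: order_gt_0_iff)
  then have "order a q > 0" using Suc.prems(3)[of a] by linarith
  then have "poly q a = 0" using Suc.prems(2) by (simp add: order_gt_0_iff)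
  obtain p' where p': "p = [:-a, 1:] * p'" using \<open>poly p a = 0\<close> by (auto simp: poly_eq_0_iff_dvd)
  obtain q' where q': "q = [:-a, 1:] * q'" using \<open>poly q a = 0\<close> by (auto simp: poly_eq_0_iff_dvd)
  have "p' \<noteq> 0" "q' \<noteq> 0" using p' q' Suc.prems(1,2) by auto
  moreover have "n = degree p'"
    using Suc.hyps(2) \<open>p' \<noteq> 0\<close> unfolding p' by (subst (asm) degree_mult_eq) auto
  moreover have "order b p' \<le> order b q'" for b
    using Suc.prems(3)[of b] Suc.prems(1,2) unfolding p' q' by (subst (asm) (1 2) order_mult) auto
  ultimately have "p' dvd q'" using Suc.hyps(1) by blast
  then show ?case unfolding p' q' by (rule mult_dvd_mono[OF dvd_refl])
qed

lemma monom_minus_const_neq_0: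
  fixes c d :: "'a::comm_ring_1"
  assumes "d \<noteq> 0" "m > 0"
  shows "monom c m - [:d:] \<noteq> 0"
proof
  assume "monom c m - [:d:] = 0"
  then have "poly (monom c m - [:d:]) 0 = 0" by simp
  then show False using assms by (simp add: poly_monom zero_power)
qed

lemma order_monom_minus_const:
  fixes c d :: "'a::field_char_0"
  assumes "c \<noteq> 0" "d \<noteq> 0" "m > 0"
  shows "order x (monom c m - [:d:]) = (if c * x ^ m = d then 1 else 0)"
proof -
  have poly_eq: "poly (monom c m - [:d:]) y = c * y ^ m - d" for y
    by (simp add: poly_monom)
  have poly_pderiv_eq: "poly (pderiv (monom c m - [:d:])) y = c * of_nat m * y ^ (m - 1)" for y
    by (simp add: pderiv_diff pderiv_monom poly_monom)
  have squarefree: "rsquarefree (monom c m - [:d:])"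
  proof (unfold rsquarefree_roots, intro allI notI, elim conjE)
    fix y assume "poly (monom c m - [:d:]) y = 0" "poly (pderiv (monom c m - [:d:])) y = 0"
    then have "c * y ^ m = d" "c * of_nat m * y ^ (m - 1) = 0"
      by (simp_all only: poly_eq poly_pderiv_eq) simp
    moreover from \<open>c * y ^ m = d\<close> have "y \<noteq> 0" using assms by (auto simp: power_0_left)
    ultimately show False using assms by simp
  qed
  show ?thesis
  proof (cases "c * x ^ m = d")
    case True
    with squarefree show ?thesis
      using rsquarefree_root_order[OF squarefree] by (simp add: poly_monom rsquarefree_def)
  next
    case False
    then have "order x (monom c m - [:d:]) = 0" by (intro order_0I) (simp add: poly_monom)
    with False show ?thesis by simp
  qed
qed

lemma pcompose_power: "pcompose (p ^ n) r = pcompose p r ^ n"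
  by (induction n) (auto simp: pcompose_mult pcompose_1)

lemma pcompose_dvd_pcompose: "p dvd q \<Longrightarrow> pcompose p r dvd pcompose q r"
  by (elim dvdE) (simp add: pcompose_mult)

lemma pcompose_monom_monom:
  "pcompose (monom c m) (monom (1::'a::comm_ring_1) k) = monom c (m * k)"
proof -
  have "pcompose (monom c m) q = smult c (q ^ m)" for q :: "'a poly"
    by (simp add: monom_altdef pcompose_smult pcompose_power pcompose_pCons)
  then show ?thesis by (simp add: monom_power smult_monom mult.commute)
qed

lemma order_pcompose_monom:
  fixes f :: "'a::field_char_0 poly"
  assumes "f \<noteq> 0" "a \<noteq> 0" "k > 0"
  shows "order a (pcompose f (monom 1 k)) = order (a ^ k) f"
proof -
  define e where "e = order (a ^ k) f"
  obtain q where f: "f = [:-(a ^ k), 1:] ^ e * q" and "\<not> [:-(a ^ k), 1:] dvd q"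
    using order_decomp[OF assms(1)] e_def by blast
  then have q: "poly q (a ^ k) \<noteq> 0" by (simp add: poly_eq_0_iff_dvd)
  have "pcompose [:-(a ^ k), 1:] (monom 1 k) = monom 1 k - [:a ^ k:]"
    by (simp add: pcompose_pCons)
  then have "pcompose f (monom 1 k) = (monom 1 k - [:a ^ k:]) ^ e * pcompose q (monom 1 k)"
    by (subst f) (simp add: pcompose_mult pcompose_power)
  moreover have "order a (monom 1 k - [:a ^ k:]) = 1"
    using assms by (simp add: order_monom_minus_const)
  moreover have "order a (pcompose q (monom 1 k)) = 0"
    using q by (intro order_0I) (simp add: poly_pcompose poly_monom)
  moreover have "monom 1 k - [:a ^ k:] \<noteq> 0"
    using assms by (intro monom_minus_const_neq_0) simp_all
  moreover have "pcompose q (monom 1 k) \<noteq> 0"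
    using q assms by (auto simp: pcompose_eq_0_iff degree_monom_eq)
  ultimately show ?thesis by (simp add: order_mult order_power e_def)
qed

lemma monom_minus_one_neq_0:
  fixes c :: "'a::comm_ring_1"
  assumes "m > 0"
  shows "monom c m - 1 \<noteq> 0"
  using monom_minus_const_neq_0[OF one_neq_zero assms, of c, unfolded pCons_one] .

lemma order_monom_minus_one_power:
  fixes c :: "'a::field_char_0"
  assumes "c \<noteq> 0" "m > 0"
  shows "order x ((monom c m - 1) ^ h) = (if c * x ^ m = 1 then h else 0)"
  using order_monom_minus_const[OF assms(1) one_neq_zero assms(2), of x, unfolded pCons_one]
  by (simp add: order_power[OF monom_minus_one_neq_0[OF assms(2)]])

lemma monom_minus_one_power_dvd:
  fixes f :: "'a::{alg_closed_field,field_char_0} poly"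
  assumes "c \<noteq> 0" "m > 0" "f \<noteq> 0" "\<And>x. c * x ^ m = 1 \<Longrightarrow> h \<le> order x f"
  shows "(monom c m - 1) ^ h dvd f"
proof (rule order_le_imp_dvd)
  show "(monom c m - 1) ^ h \<noteq> 0" by (rule power_not_zero[OF monom_minus_one_neq_0[OF assms(2)]])
  show "order x ((monom c m - 1) ^ h) \<le> order x f" for x
    using assms(4)[of x] by (simp add: order_monom_minus_one_power[OF assms(1,2)])
qed (rule assms(3))

lemma monom_minus_one_dvd_pcompose:
  fixes c :: "'a::comm_ring_1"
  assumes "c ^ k = c"
  shows "monom c m - 1 dvd pcompose (monom c m - 1) (monom 1 k)"
proof -
  have "pcompose (monom c m - 1) (monom 1 k) = monom c m ^ k - 1"
    using assms by (simp add: pcompose_diff pcompose_monom_monom pcompose_1 monom_power)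
  then show ?thesis by (metis dvd_triv_left power_diff_1_eq)
qed

lemma Lcm_dvd_pcompose_Lcm:
  fixes S :: "'a::{factorial_ring_gcd,semiring_gcd_mult_normalize} poly set"
  assumes "\<And>p. p \<in> S \<Longrightarrow> p dvd pcompose p r"
  shows "Lcm S dvd pcompose (Lcm S) r"
proof (rule Lcm_least)
  fix p assume "p \<in> S"
  then have "pcompose p r dvd pcompose (Lcm S) r" by (intro pcompose_dvd_pcompose dvd_Lcm)
  with assms[OF \<open>p \<in> S\<close>] show "p dvd pcompose (Lcm S) r" by (rule dvd_trans)
qed

lemma Lcm_eqI_order:
  fixes f :: "'a::{alg_closed_field,factorial_ring_gcd,semiring_gcd_mult_normalize} poly"
  assumes "f \<noteq> 0" "normalize f = f" "\<And>p. p \<in> S \<Longrightarrow> p dvd f"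
    and "\<And>x. poly f x = 0 \<Longrightarrow> \<exists>p\<in>S. order x f \<le> order x p"
  shows "Lcm S = f"
proof -
  have "Lcm S dvd f" using assms(3) by (rule Lcm_least)
  then have L: "Lcm S \<noteq> 0" using assms(1) by auto
  have "f dvd Lcm S"
  proof (rule order_le_imp_dvd[OF assms(1) L])
    fix x
    show "order x f \<le> order x (Lcm S)"
    proof (cases "poly f x = 0")
      case True
      then obtain p where "p \<in> S" "order x f \<le> order x p" using assms(4) by blast
      then show ?thesis using dvd_imp_order_le[OF L dvd_Lcm[OF \<open>p \<in> S\<close>], of x] by linarith
    qed (simp add: order_0I)
  qed
  with \<open>Lcm S dvd f\<close> show ?thesis
    by (rule associated_eqI) (simp_all add: assms(2))
qed

lemma ex_binomial_factor_through_root: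
  fixes f :: "complex poly"
  assumes z: "primitive_root_unity M z"
    and f: "poly f 0 \<noteq> 0"
    and closed: "\<And>t. f dvd pcompose f (monom 1 (1 + M * t))"
    and root: "poly f a = 0"
  shows "\<exists>m>0. \<exists>j<M. z ^ j * a ^ m = 1 \<and> (\<forall>x. z ^ j * x ^ m = 1 \<longrightarrow> order a f \<le> order x f)"
proof -
  have "f \<noteq> 0" and "a \<noteq> 0" using f root by auto
  have orbit: "order a f \<le> order (a * (a ^ M) ^ t) f" for t
  proof -
    have "order a f \<le> order a (pcompose f (monom 1 (1 + M * t)))"
      using closed \<open>f \<noteq> 0\<close> by (intro dvd_imp_order_le) (auto simp: pcompose_eq_0_iff degree_monom_eq)
    also have "\<dots> = order (a ^ (1 + M * t)) f"
      using \<open>f \<noteq> 0\<close> \<open>a \<noteq> 0\<close> by (simp add: order_pcompose_monom)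
    finally show ?thesis by (simp add: power_add power_mult)
  qed
  have "poly f (a * (a ^ M) ^ t) = 0" for t
    using orbit[of t] root \<open>f \<noteq> 0\<close> order_gt_0_iff[OF \<open>f \<noteq> 0\<close>] by (metis less_le_trans)
  then have "finite (range (\<lambda>t. a * (a ^ M) ^ t))"
    using poly_roots_finite[OF \<open>f \<noteq> 0\<close>] by (elim finite_subset[rotated]) auto
  then obtain t where "t > 0" "(a ^ M) ^ t = 1"
    using root_of_unity_if_finite_orbit[of a "a ^ M"] \<open>a \<noteq> 0\<close> by auto
  define m where "m = (LEAST d. 0 < d \<and> (a ^ M) ^ d = 1)"
  have prim: "primitive_root_unity m (a ^ M)"
    unfolding m_def by (rule primitive_root_unity_Least) fact+
  then have "m > 0" "(inverse (a ^ m)) ^ M = 1"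
    unfolding primitive_root_unity_def by (auto simp: power_inverse mult.commute simp flip: power_mult)
  then obtain j where "j < M" "inverse (a ^ m) = z ^ j"
    using primitive_root_unity_powers[OF z] by blast
  then have zj: "z ^ j * a ^ m = 1" using \<open>a \<noteq> 0\<close> by (metis left_inverse power_not_zero)
  have "order a f \<le> order x f" if "z ^ j * x ^ m = 1" for x
  proof -
    have "x ^ m = a ^ m" using that zj by (metis mult_left_cancel zero_neq_one mult_zero_left)
    then obtain i where "x = a * (a ^ M) ^ i"
      using power_eq_power_imp_eq_mult_root[OF prim \<open>a \<noteq> 0\<close>] by blast
    then show ?thesis using orbit by simp
  qed
  with zj \<open>m > 0\<close> \<open>j < M\<close> show ?thesis by blast
qed

lemma eq_Lcm_binomials_if_dvd_pcompose:
  fixes f :: "complex poly"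
  assumes z: "primitive_root_unity M z"
    and monic: "lead_coeff f = 1" and f0: "poly f 0 \<noteq> 0"
    and closed: "\<And>t. f dvd pcompose f (monom 1 (1 + M * t))"
  shows "\<exists>h. finite {(m, j). m \<ge> 1 \<and> j < M \<and> h m j \<noteq> 0} \<and>
    f = Lcm ((\<lambda>(m, j). (monom (z ^ j) m - 1) ^ h m j) ` ({1..} \<times> {..<M}))"
proof -
  have "f \<noteq> 0" using f0 by auto
  have "z \<noteq> 0" using z by (auto simp: primitive_root_unity_def zero_power)
  define through where "through a m j \<longleftrightarrow> poly f a = 0 \<and> z ^ j * a ^ m = 1 \<and>
    (\<forall>x. z ^ j * x ^ m = 1 \<longrightarrow> order a f \<le> order x f)" for a m j
  define h where "h m j = Max (insert 0 {order a f | a. through a m j})" for m j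
  have fin: "finite {order a f | a. through a m j}" for m j
    using poly_roots_finite[OF \<open>f \<noteq> 0\<close>] unfolding through_def by (auto simp: setcompr_eq_image)
  have h_ge: "order a f \<le> h m j" if "through a m j" for a m j
    unfolding h_def using fin that by (intro Max_ge) auto
  have h_le: "h m j \<le> order x f" if "z ^ j * x ^ m = 1" for m j x
  proof -
    have "h m j \<in> insert 0 {order a f | a. through a m j}"
      unfolding h_def using fin by (intro Max_in) auto
    then show ?thesis using that unfolding through_def by auto
  qed
  have h_dvd: "(monom (z ^ j) m - 1) ^ h m j dvd f" if "m > 0" for m j
    using \<open>z \<noteq> 0\<close> that \<open>f \<noteq> 0\<close> h_le by (intro monom_minus_one_power_dvd) simp_all
  have "m \<le> degree f" if "m > 0" "h m j \<noteq> 0" for m j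
  proof -
    have "(monom (z ^ j) m - 1) ^ 1 dvd f"
      using \<open>z \<noteq> 0\<close> that \<open>f \<noteq> 0\<close> h_le[of j _ m]
      by (intro monom_minus_one_power_dvd) fastforce+
    then have "degree (monom (z ^ j) m - 1) \<le> degree f"
      using \<open>f \<noteq> 0\<close> by (simp add: dvd_imp_degree_le)
    moreover have "m \<le> degree (monom (z ^ j) m - 1)"
      using \<open>z \<noteq> 0\<close> that(1) by (intro le_degree) (simp add: coeff_1)
    ultimately show ?thesis by linarith
  qed
  then have "{(m, j). m \<ge> 1 \<and> j < M \<and> h m j \<noteq> 0} \<subseteq> {1..degree f} \<times> {..<M}" by auto
  then have "finite {(m, j). m \<ge> 1 \<and> j < M \<and> h m j \<noteq> 0}" by (rule finite_subset) simp
  moreover have "Lcm ((\<lambda>(m, j). (monom (z ^ j) m - 1) ^ h m j) ` ({1..} \<times> {..<M})) = f"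
  proof (rule Lcm_eqI_order[OF \<open>f \<noteq> 0\<close>])
    show "normalize f = f" using monic by (simp add: normalize_poly_eq_map_poly map_poly_idI)
    show "p dvd f" if "p \<in> (\<lambda>(m, j). (monom (z ^ j) m - 1) ^ h m j) ` ({1..} \<times> {..<M})" for p
      using that h_dvd by auto
    fix x assume "poly f x = 0"
    then obtain m j where "m > 0" "j < M" "through x m j"
      using ex_binomial_factor_through_root[OF z f0 closed] unfolding through_def by blast
    then have "order x f \<le> order x ((monom (z ^ j) m - 1) ^ h m j)"
      using h_ge \<open>z \<noteq> 0\<close> by (simp add: order_monom_minus_one_power through_def)
    with \<open>m > 0\<close> \<open>j < M\<close> show "\<exists>p\<in>(\<lambda>(m, j). (monom (z ^ j) m - 1) ^ h m j) ` ({1..} \<times> {..<M}).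
        order x f \<le> order x p" by force
  qed
  ultimately show ?thesis by auto
qed

lemma smult_Lcm_binomials_dvd_pcompose:
  fixes z c :: "'a::{field,factorial_ring_gcd,semiring_gcd_mult_normalize}"
    and h :: "nat \<Rightarrow> nat \<Rightarrow> nat" and A :: "(nat \<times> nat) set"
  assumes "z ^ M = 1" "k mod M = 1 mod M"
  defines "L \<equiv> smult c (Lcm ((\<lambda>(m, j). (monom (z ^ j) m - 1) ^ h m j) ` A))"
  shows "L dvd pcompose L (monom 1 k)"
proof -
  have "(z ^ j) ^ k = z ^ j" for j
  proof -
    have "(j * k) mod M = j mod M" using assms(2) by (metis mod_mult_right_eq mult.right_neutral)
    then show ?thesis by (metis power_mod_eq[OF assms(1)] power_mult)
  qed
  then have "Lcm ((\<lambda>(m, j). (monom (z ^ j) m - 1) ^ h m j) ` A) dvd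
      pcompose (Lcm ((\<lambda>(m, j). (monom (z ^ j) m - 1) ^ h m j) ` A)) (monom 1 k)"
    by (intro Lcm_dvd_pcompose_Lcm)
      (auto simp: pcompose_power intro!: dvd_power_same monom_minus_one_dvd_pcompose)
  then show ?thesis unfolding L_def by (simp add: pcompose_smult smult_dvd_iff dvd_smult)
qed

theorem lemma2:
  fixes M :: nat and z :: complex and f :: "complex poly"
  assumes "M \<ge> 1"
    and "primitive_root_unity M z"
    and "lead_coeff f = 1"
    and "poly f 0 \<noteq> 0"
  shows "(\<forall>k::nat. k \<ge> 1 \<and> k mod M = 1 mod M \<longrightarrow> f dvd pcompose f (monom 1 k)) \<longleftrightarrow>
    (\<exists>h :: nat \<Rightarrow> nat \<Rightarrow> nat.
       finite {(m, j). m \<ge> 1 \<and> j < M \<and> h m j \<noteq> 0} \<and>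
       (\<exists>c::complex. c \<noteq> 0 \<and>
          f = smult c (Lcm ((\<lambda>(m, j). (monom (z ^ j) m - 1) ^ h m j) ` ({1..} \<times> {..<M})))))"
proof
  assume closed: "\<forall>k. k \<ge> 1 \<and> k mod M = 1 mod M \<longrightarrow> f dvd pcompose f (monom 1 k)"
  have "(1 + M * t) mod M = 1 mod M" for t by (metis mod_mult_self2 mult.commute)
  then obtain h where "finite {(m, j). m \<ge> 1 \<and> j < M \<and> h m j \<noteq> 0}"
    and "f = Lcm ((\<lambda>(m, j). (monom (z ^ j) m - 1) ^ h m j) ` ({1..} \<times> {..<M}))"
    using eq_Lcm_binomials_if_dvd_pcompose[OF assms(2-4)] closed by auto
  then show "\<exists>h. finite {(m, j). m \<ge> 1 \<and> j < M \<and> h m j \<noteq> 0} \<and>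
      (\<exists>c. c \<noteq> 0 \<and> f = smult c (Lcm ((\<lambda>(m, j). (monom (z ^ j) m - 1) ^ h m j) ` ({1..} \<times> {..<M}))))"
    by (intro exI[of _ h] conjI exI[of _ 1]) simp_all
next
  assume "\<exists>h. finite {(m, j). m \<ge> 1 \<and> j < M \<and> h m j \<noteq> 0} \<and>
      (\<exists>c. c \<noteq> 0 \<and> f = smult c (Lcm ((\<lambda>(m, j). (monom (z ^ j) m - 1) ^ h m j) ` ({1..} \<times> {..<M}))))"
  then obtain h c where "f = smult c (Lcm ((\<lambda>(m, j). (monom (z ^ j) m - 1) ^ h m j) ` ({1..} \<times> {..<M})))"
    by blast
  moreover have "z ^ M = 1" using assms(2) by (simp add: primitive_root_unity_def)
  ultimately show "\<forall>k. k \<ge> 1 \<and> k mod M = 1 mod M \<longrightarrow> f dvd pcompose f (monom 1 k)"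
    using smult_Lcm_binomials_dvd_pcompose by blast
qed

end
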